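(* Let $t>0$ be such that $I(t)$ has nonempty interior, $I(t)=[l(t),r(t)]$ with $l(t)<r(t)$. Then: (1) $F(x,t)=G(x,t)=0$ for all $x\in I(t)$; (2) $\tau_*(x,t)=\tau^*(x,t)=0$ for $x\in(l(t),r(t)]$, and $\tau_*(l(t),t)=0$; (3) $y_*(x,t)=y^*(x,t)=0$ for $x\in[l(t),r(t))$, and $y_*(r(t),t)=0$; (4) for all $0<t'<t$, $I(t')$ has nonempty interior; (5) the set $\{(x,t'):0\le t'\le t,\ x\in I(t')\}$ is star-shaped with respect to $(0,0)$.
   Context: Standing assumptions: $u_0,u_b:[0,\infty)\to\mathbb{R}$ bounded measurable with $u_b>0$; $\rho_0,\rho_b:[0,\infty)\to(0,\infty)$ positive locally bounded measurable. For $x,t,y,\tau\ge0$: $F(y,x,t)=\int_0^y[tu_0(\eta)+\eta-x]\rho_0(\eta)\,d\eta$, $G(\tau,x,t)=\int_0^\tau[x-u_b(\eta)(t-\eta)]\rho_b(\eta)u_b(\eta)\,d\eta$, $F(x,t)=\min_{y\ge0}F(y,x,t)$, $G(x,t)=\min_{\tau\ge0}G(\tau,x,t)$ (minima attained); $y_*\le y^*$ smallest/largest minimizers of $F(\cdot,x,t)$, $\tau_*\le\tau^*$ those of $G(\cdot,x,t)$. For fixed $t$, $F(\cdot,t)$ is decreasing and $G(\cdot,t)$ increasing in $x$, so $I(t)=\{x\ge0:F(x,t)=G(x,t)\}$ is a closed (possibly empty or one-point) interval, written $[l(t),r(t)]$ when nonempty. *)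

theory Defs
  imports "HOL-Analysis.Analysis"
begin

definition Fy :: "(real \<Rightarrow> real) \<Rightarrow> (real \<Rightarrow> real) \<Rightarrow> real \<Rightarrow> real \<Rightarrow> real \<Rightarrow> real" where
  "Fy u0 rho0 y x t = (LBINT \<eta>:{0..y}. (t * u0 \<eta> + \<eta> - x) * rho0 \<eta>)"

definition Gt :: "(real \<Rightarrow> real) \<Rightarrow> (real \<Rightarrow> real) \<Rightarrow> real \<Rightarrow> real \<Rightarrow> real \<Rightarrow> real" where
  "Gt ub rhob \<tau> x t = (LBINT \<eta>:{0..\<tau>}. (x - ub \<eta> * (t - \<eta>)) * rhob \<eta> * ub \<eta>)"

definition Fmin :: "(real \<Rightarrow> real) \<Rightarrow> (real \<Rightarrow> real) \<Rightarrow> real \<Rightarrow> real \<Rightarrow> real" where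
  "Fmin u0 rho0 x t = (INF y\<in>{0..}. Fy u0 rho0 y x t)"

definition Gmin :: "(real \<Rightarrow> real) \<Rightarrow> (real \<Rightarrow> real) \<Rightarrow> real \<Rightarrow> real \<Rightarrow> real" where
  "Gmin ub rhob x t = (INF \<tau>\<in>{0..}. Gt ub rhob \<tau> x t)"

definition ylow :: "(real \<Rightarrow> real) \<Rightarrow> (real \<Rightarrow> real) \<Rightarrow> real \<Rightarrow> real \<Rightarrow> real" where
  "ylow u0 rho0 x t = Inf {y. 0 \<le> y \<and> Fy u0 rho0 y x t = Fmin u0 rho0 x t}"
definition yupp :: "(real \<Rightarrow> real) \<Rightarrow> (real \<Rightarrow> real) \<Rightarrow> real \<Rightarrow> real \<Rightarrow> real" where
  "yupp u0 rho0 x t = Sup {y. 0 \<le> y \<and> Fy u0 rho0 y x t = Fmin u0 rho0 x t}"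
definition taulow :: "(real \<Rightarrow> real) \<Rightarrow> (real \<Rightarrow> real) \<Rightarrow> real \<Rightarrow> real \<Rightarrow> real" where
  "taulow ub rhob x t = Inf {\<tau>. 0 \<le> \<tau> \<and> Gt ub rhob \<tau> x t = Gmin ub rhob x t}"
definition tauupp :: "(real \<Rightarrow> real) \<Rightarrow> (real \<Rightarrow> real) \<Rightarrow> real \<Rightarrow> real \<Rightarrow> real" where
  "tauupp ub rhob x t = Sup {\<tau>. 0 \<le> \<tau> \<and> Gt ub rhob \<tau> x t = Gmin ub rhob x t}"

definition Iset :: "(real \<Rightarrow> real) \<Rightarrow> (real \<Rightarrow> real) \<Rightarrow> (real \<Rightarrow> real) \<Rightarrow> (real \<Rightarrow> real) \<Rightarrow> real \<Rightarrow> real set" where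
  "Iset u0 rho0 ub rhob t = {x. 0 \<le> x \<and> Fmin u0 rho0 x t = Gmin ub rhob x t}"

end

theory Submission
  imports Defs
begin

text \<open>For fixed y and tau the integrals are affine in (x,t):
F(y,x,t) = t U(y) + E(y) - x P(y) and G(tau,x,t) = x Q(tau) - t V(tau) + W(tau), with P, Q > 0
away from 0 and E, W >= 0. Since y = 0 and tau = 0 give the value 0, F(x,t) and G(x,t) are
nonpositive, F is decreasing and G increasing in x, strictly so along any y > 0 or tau > 0.
If F = G on [l,r] with l < r, then F(r) <= F(l) = G(l) <= G(r) = F(r), so G is constant on
[l,r]; a minimizer tau > 0 of G(.,r,t) would give G(l,t) <= G(tau,l,t) < G(tau,r,t) = G(r,t),
hence 0 is the only minimizer and F = G = 0 on [l,r]. The same comparison with the other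
endpoint shows that all minimizers vanish.

Moreover F(y,sx,st) = s F(y,x,t) + (1 - s) E(y) for 0 <= s <= 1, and likewise for G, so the
set where F = G = 0 is star-shaped with respect to the origin. At height t' = s t the scaled
endpoints (s l, t') and (s r, t') lie in this set, and monotonicity then forces F = G = 0 on
all of I(t').\<close>

section \<open>Locally bounded measurable functions on the half-line\<close>

definition locally_bounded_measurable :: "(real \<Rightarrow> real) \<Rightarrow> bool" where
  "locally_bounded_measurable g \<longleftrightarrow>
     set_borel_measurable borel {0..} g \<and> (\<forall>M. bounded (g ` {0..M}))"

lemma set_borel_measurable_add:
  fixes f g :: "'a \<Rightarrow> real"
  assumes "set_borel_measurable M S f" "set_borel_measurable M S g"
  shows "set_borel_measurable M S (\<lambda>x. f x + g x)"
  using borel_measurable_add[OF assms[unfolded set_borel_measurable_def]]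
  by (simp add: set_borel_measurable_def distrib_left)

lemma set_borel_measurable_mult:
  fixes f g :: "'a \<Rightarrow> real"
  assumes "set_borel_measurable M S f" "set_borel_measurable M S g"
  shows "set_borel_measurable M S (\<lambda>x. f x * g x)"
proof -
  have "(\<lambda>x. indicator S x *\<^sub>R (f x * g x)) =
      (\<lambda>x. (indicator S x *\<^sub>R f x) * (indicator S x *\<^sub>R g x))"
    by (simp add: fun_eq_iff indicator_def)
  then show ?thesis
    using borel_measurable_times[OF assms[unfolded set_borel_measurable_def]]
    by (simp add: set_borel_measurable_def)
qed

lemma bounded_mult_comp:
  fixes f g :: "'a \<Rightarrow> real"
  assumes "bounded (f ` S)" "bounded (g ` S)"
  shows "bounded ((\<lambda>x. f x * g x) ` S)"
proof -
  obtain B C where "\<And>x. x \<in> S \<Longrightarrow> \<bar>f x\<bar> \<le> B" "\<And>x. x \<in> S \<Longrightarrow> \<bar>g x\<bar> \<le> C"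
    using assms by (auto simp: bounded_iff)
  then have "\<And>x. x \<in> S \<Longrightarrow> \<bar>f x * g x\<bar> \<le> B * C"
    by (simp add: abs_mult mult_mono')
  then show ?thesis
    by (auto simp: bounded_iff)
qed

lemma locally_bounded_measurable_add:
  "locally_bounded_measurable f \<Longrightarrow> locally_bounded_measurable g \<Longrightarrow>
    locally_bounded_measurable (\<lambda>x. f x + g x)"
  by (simp add: locally_bounded_measurable_def set_borel_measurable_add bounded_plus_comp)

lemma locally_bounded_measurable_mult:
  "locally_bounded_measurable f \<Longrightarrow> locally_bounded_measurable g \<Longrightarrow>
    locally_bounded_measurable (\<lambda>x. f x * g x)"
  by (simp add: locally_bounded_measurable_def set_borel_measurable_mult bounded_mult_comp)

lemma locally_bounded_measurable_const: "locally_bounded_measurable (\<lambda>x. c)"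
  by (auto simp: locally_bounded_measurable_def set_borel_measurable_def
      intro: bounded_subset[of "{c}"])

lemma locally_bounded_measurable_id: "locally_bounded_measurable (\<lambda>x. x)"
  by (simp add: locally_bounded_measurable_def set_borel_measurable_def)

lemma locally_bounded_measurable_diff:
  assumes "locally_bounded_measurable f" "locally_bounded_measurable g"
  shows "locally_bounded_measurable (\<lambda>x. f x - g x)"
  using locally_bounded_measurable_add[OF assms(1)
      locally_bounded_measurable_mult[OF locally_bounded_measurable_const assms(2)], of "-1"]
  by simp

lemma locally_bounded_measurableI_bounded:
  assumes "set_borel_measurable borel {0..} g" "\<exists>B. \<forall>\<eta>\<ge>0. \<bar>g \<eta>\<bar> \<le> B"
  shows "locally_bounded_measurable g"
proof -
  obtain B where "\<forall>\<eta>\<ge>0. \<bar>g \<eta>\<bar> \<le> B"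
    using assms(2) by blast
  then have "\<forall>\<eta>\<in>{0..M}. \<bar>g \<eta>\<bar> \<le> B" for M
    by simp
  with assms(1) show ?thesis
    by (auto simp: locally_bounded_measurable_def bounded_iff)
qed

lemma locally_bounded_measurableI_pos:
  assumes "set_borel_measurable borel {0..} g" "\<forall>\<eta>\<ge>0. g \<eta> > 0"
    and "\<forall>M\<ge>0. \<exists>C. \<forall>\<eta>\<in>{0..M}. g \<eta> \<le> C"
  shows "locally_bounded_measurable g"
proof -
  have "bounded (g ` {0..M})" for M
  proof (cases "M \<ge> 0")
    case True
    then obtain C where "\<forall>\<eta>\<in>{0..M}. g \<eta> \<le> C"
      using assms(3) by blast
    with assms(2) show ?thesis
      by (force simp: bounded_iff)
  qed simp
  with assms(1) show ?thesis
    by (simp add: locally_bounded_measurable_def)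
qed

lemma locally_bounded_measurable_set_integrable:
  assumes "locally_bounded_measurable g"
  shows "set_integrable lborel {0..y} g"
proof -
  obtain C where C: "\<forall>\<eta>\<in>{0..y}. \<bar>g \<eta>\<bar> \<le> C"
    using assms unfolding locally_bounded_measurable_def bounded_iff by auto
  have "(\<lambda>x. indicator {0..} x * g x) \<in> borel_measurable lborel"
    using assms by (simp add: locally_bounded_measurable_def set_borel_measurable_def)
  then have "integrable lborel (\<lambda>x. indicator {0..y} x *\<^sub>R (indicator {0..} x * g x))"
    by (intro integrableI_bounded_set_indicator[where B = C]) (auto simp: C emeasure_lborel_Icc_eq)
  moreover have "(\<lambda>x. indicator {0..y} x *\<^sub>R (indicator {0..} x * g x)) =
      (\<lambda>x. indicator {0..y} x *\<^sub>R g x)"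
    by (simp add: fun_eq_iff indicator_def)
  ultimately show ?thesis
    by (simp add: set_integrable_def)
qed

lemma locally_bounded_measurable_integrable_on:
  "locally_bounded_measurable g \<Longrightarrow> g integrable_on {0..y}"
  using set_borel_integral_eq_integral(1)[OF locally_bounded_measurable_set_integrable] .

lemma locally_bounded_measurable_LBINT_eq_integral:
  "locally_bounded_measurable g \<Longrightarrow> (LBINT \<eta>:{0..y}. g \<eta>) = integral {0..y} g"
  using set_borel_integral_eq_integral(2)[OF locally_bounded_measurable_set_integrable] by simp

lemma locally_bounded_measurable_integral_pos:
  assumes g: "locally_bounded_measurable g" and pos: "\<And>\<eta>. \<eta> \<ge> 0 \<Longrightarrow> g \<eta> > 0"
    and "y > 0"
  shows "integral {0..y} g > 0"
proof (rule ccontr)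
  have int: "integrable lborel (\<lambda>x. indicator {0..y} x *\<^sub>R g x)"
    using locally_bounded_measurable_set_integrable[OF g] by (simp add: set_integrable_def)
  have "integral {0..y} g \<ge> 0"
    using locally_bounded_measurable_integrable_on[OF g] pos
    by (intro integral_nonneg) (auto intro: less_imp_le)
  moreover assume "\<not> integral {0..y} g > 0"
  ultimately have "integral\<^sup>L lborel (\<lambda>x. indicator {0..y} x *\<^sub>R g x) = 0"
    using locally_bounded_measurable_LBINT_eq_integral[OF g] by (simp add: set_lebesgue_integral_def)
  moreover have "AE x in lborel. 0 \<le> indicator {0..y} x *\<^sub>R g x"
    using pos by (auto simp: indicator_def less_imp_le)
  ultimately have "AE x in lborel. indicator {0..y} x *\<^sub>R g x = 0"
    using integral_nonneg_eq_0_iff_AE[OF int] by simp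
  then have "AE x in lborel. x \<notin> {0..y}"
    by (rule eventually_mono) (use pos in \<open>fastforce simp: indicator_def split: if_splits\<close>)
  then have "{0..y} \<in> null_sets lborel"
    by (subst AE_iff_null_sets) auto
  then show False
    using \<open>y > 0\<close> by (auto simp: null_sets_def emeasure_lborel_Icc_eq)
qed

text \<open>Beyond K the indefinite integral is nondecreasing, and on [0,K] it is continuous.\<close>
lemma indefinite_integral_attains_min:
  assumes g: "locally_bounded_measurable g" and "0 \<le> K"
    and nonneg: "\<And>\<eta>. \<eta> \<ge> K \<Longrightarrow> g \<eta> \<ge> 0"
  obtains y0 where "y0 \<ge> 0" "\<And>y. y \<ge> 0 \<Longrightarrow> integral {0..y0} g \<le> integral {0..y} g"
proof -
  have "continuous_on {0..K} (\<lambda>y. integral {0..y} g)"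
    by (rule indefinite_integral_continuous_1) (rule locally_bounded_measurable_integrable_on[OF g])
  then obtain y0 where y0: "y0 \<in> {0..K}"
    "\<And>y. y \<in> {0..K} \<Longrightarrow> integral {0..y0} g \<le> integral {0..y} g"
    using continuous_attains_inf[of "{0..K}" "\<lambda>y. integral {0..y} g"] \<open>0 \<le> K\<close> by auto
  have beyond_K: "integral {0..y0} g \<le> integral {0..y} g" if "y \<ge> K" for y
  proof -
    have int: "g integrable_on {0..y}"
      by (rule locally_bounded_measurable_integrable_on[OF g])
    have "integral {0..K} g + integral {K..y} g = integral {0..y} g"
      using that \<open>0 \<le> K\<close> int by (intro Henstock_Kurzweil_Integration.integral_combine) auto
    moreover have "integral {K..y} g \<ge> 0"
      using integrable_on_subinterval[OF int] \<open>0 \<le> K\<close> nonneg by (intro integral_nonneg) auto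
    moreover have "integral {0..y0} g \<le> integral {0..K} g"
      using y0 \<open>0 \<le> K\<close> by auto
    ultimately show ?thesis
      by linarith
  qed
  show thesis
  proof (rule that)
    show "y0 \<ge> 0"
      using y0(1) by simp
    show "integral {0..y0} g \<le> integral {0..y} g" if "y \<ge> 0" for y
      using y0(2)[of y] beyond_K[of y] that by (cases "y \<le> K") auto
  qed
qed

section \<open>The functions F and G\<close>

locale initial_boundary_data =
  fixes u0 ub rho0 rhob :: "real \<Rightarrow> real"
  assumes u0: "locally_bounded_measurable u0" and ub: "locally_bounded_measurable ub"
    and rho0: "locally_bounded_measurable rho0" and rhob: "locally_bounded_measurable rhob"
    and u0_bdd: "\<exists>B. \<forall>\<eta>\<ge>0. \<bar>u0 \<eta>\<bar> \<le> B"
    and ub_pos: "\<And>\<eta>. \<eta> \<ge> 0 \<Longrightarrow> ub \<eta> > 0"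
    and rho0_pos: "\<And>\<eta>. \<eta> \<ge> 0 \<Longrightarrow> rho0 \<eta> > 0"
    and rhob_pos: "\<And>\<eta>. \<eta> \<ge> 0 \<Longrightarrow> rhob \<eta> > 0"
begin

definition P :: "real \<Rightarrow> real" where "P y = integral {0..y} rho0"
definition U :: "real \<Rightarrow> real" where "U y = integral {0..y} (\<lambda>\<eta>. u0 \<eta> * rho0 \<eta>)"
definition E :: "real \<Rightarrow> real" where "E y = integral {0..y} (\<lambda>\<eta>. \<eta> * rho0 \<eta>)"
definition Q :: "real \<Rightarrow> real" where "Q \<tau> = integral {0..\<tau>} (\<lambda>\<eta>. rhob \<eta> * ub \<eta>)"
definition V :: "real \<Rightarrow> real" where "V \<tau> = integral {0..\<tau>} (\<lambda>\<eta>. ub \<eta> * ub \<eta> * rhob \<eta>)"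
definition W :: "real \<Rightarrow> real" where "W \<tau> = integral {0..\<tau>} (\<lambda>\<eta>. \<eta> * ub \<eta> * ub \<eta> * rhob \<eta>)"

lemmas locally_bounded_measurable_intros =
  locally_bounded_measurable_add locally_bounded_measurable_diff locally_bounded_measurable_mult
  locally_bounded_measurable_const locally_bounded_measurable_id u0 ub rho0 rhob

lemma Fy_integral:
  "Fy u0 rho0 y x t = integral {0..y} (\<lambda>\<eta>. (t * u0 \<eta> + \<eta> - x) * rho0 \<eta>)"
  unfolding Fy_def
  by (intro locally_bounded_measurable_LBINT_eq_integral locally_bounded_measurable_intros)

lemma Gt_integral:
  "Gt ub rhob \<tau> x t = integral {0..\<tau>} (\<lambda>\<eta>. (x - ub \<eta> * (t - \<eta>)) * rhob \<eta> * ub \<eta>)"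
  unfolding Gt_def
  by (intro locally_bounded_measurable_LBINT_eq_integral locally_bounded_measurable_intros)

lemma Fy_affine: "Fy u0 rho0 y x t = t * U y + E y - x * P y"
proof -
  have "Fy u0 rho0 y x t =
      integral {0..y} (\<lambda>\<eta>. t * (u0 \<eta> * rho0 \<eta>) + \<eta> * rho0 \<eta> - x * rho0 \<eta>)"
    unfolding Fy_integral by (rule integral_cong) (simp add: algebra_simps)
  also have "\<dots> = t * U y + E y - x * P y"
    unfolding U_def E_def P_def
    by (simp add: integral_diff integral_add integrable_add integrable_diff integrable_cmul
        locally_bounded_measurable_integrable_on locally_bounded_measurable_intros)
  finally show ?thesis .
qed

lemma Gt_affine: "Gt ub rhob \<tau> x t = x * Q \<tau> - t * V \<tau> + W \<tau>"
proof -
  have "Gt ub rhob \<tau> x t = integral {0..\<tau>} (\<lambda>\<eta>. x * (rhob \<eta> * ub \<eta>)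
      - t * (ub \<eta> * ub \<eta> * rhob \<eta>) + \<eta> * ub \<eta> * ub \<eta> * rhob \<eta>)"
    unfolding Gt_integral by (rule integral_cong) (simp add: algebra_simps)
  also have "\<dots> = x * Q \<tau> - t * V \<tau> + W \<tau>"
    unfolding Q_def V_def W_def
    by (simp add: integral_diff integral_add integrable_add integrable_diff integrable_cmul
        locally_bounded_measurable_integrable_on locally_bounded_measurable_intros)
  finally show ?thesis .
qed

lemma P_pos: "y > 0 \<Longrightarrow> P y > 0"
  unfolding P_def using locally_bounded_measurable_integral_pos[OF rho0 rho0_pos] .

lemma Q_pos: "\<tau> > 0 \<Longrightarrow> Q \<tau> > 0"
  unfolding Q_def
  by (rule locally_bounded_measurable_integral_pos)
    (auto intro: locally_bounded_measurable_intros rhob_pos ub_pos mult_pos_pos)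

lemma P_nonneg: "y \<ge> 0 \<Longrightarrow> P y \<ge> 0"
  using P_pos[of y] by (cases "y = 0") (auto simp: P_def)

lemma Q_nonneg: "\<tau> \<ge> 0 \<Longrightarrow> Q \<tau> \<ge> 0"
  using Q_pos[of \<tau>] by (cases "\<tau> = 0") (auto simp: Q_def)

lemma E_nonneg: "E y \<ge> 0"
  unfolding E_def using rho0_pos[THEN less_imp_le]
  by (intro integral_nonneg locally_bounded_measurable_integrable_on locally_bounded_measurable_intros)
    simp

lemma W_nonneg: "W \<tau> \<ge> 0"
  unfolding W_def using rhob_pos[THEN less_imp_le] ub_pos[THEN less_imp_le]
  by (intro integral_nonneg locally_bounded_measurable_integrable_on locally_bounded_measurable_intros)
    simp

lemma Fy_at_0 [simp]: "Fy u0 rho0 0 x t = 0"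
  by (simp add: Fy_affine U_def E_def P_def)

lemma Gt_at_0 [simp]: "Gt ub rhob 0 x t = 0"
  by (simp add: Gt_affine Q_def V_def W_def)

lemma Fy_antimono: "y \<ge> 0 \<Longrightarrow> x \<le> x' \<Longrightarrow> Fy u0 rho0 y x' t \<le> Fy u0 rho0 y x t"
  using mult_right_mono[OF _ P_nonneg] by (simp add: Fy_affine)

lemma Gt_mono: "\<tau> \<ge> 0 \<Longrightarrow> x \<le> x' \<Longrightarrow> Gt ub rhob \<tau> x t \<le> Gt ub rhob \<tau> x' t"
  using mult_right_mono[OF _ Q_nonneg] by (simp add: Gt_affine)

lemma Fy_strict_antimono: "y > 0 \<Longrightarrow> x < x' \<Longrightarrow> Fy u0 rho0 y x' t < Fy u0 rho0 y x t"
  using mult_strict_right_mono[OF _ P_pos] by (simp add: Fy_affine)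

lemma Gt_strict_mono: "\<tau> > 0 \<Longrightarrow> x < x' \<Longrightarrow> Gt ub rhob \<tau> x t < Gt ub rhob \<tau> x' t"
  using mult_strict_right_mono[OF _ Q_pos] by (simp add: Gt_affine)

lemma Fy_has_min:
  assumes "t \<ge> 0"
  obtains y0 where "y0 \<ge> 0" "\<And>y. y \<ge> 0 \<Longrightarrow> Fy u0 rho0 y0 x t \<le> Fy u0 rho0 y x t"
proof -
  define g where "g = (\<lambda>\<eta>. (t * u0 \<eta> + \<eta> - x) * rho0 \<eta>)"
  obtain B where B: "\<And>\<eta>. \<eta> \<ge> 0 \<Longrightarrow> - B \<le> u0 \<eta>"
    using u0_bdd by (metis abs_le_iff minus_le_iff)
  have nonneg: "g \<eta> \<ge> 0" if "\<eta> \<ge> max 0 (x + t * B)" for \<eta>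
  proof -
    have "t * (- B) \<le> t * u0 \<eta>"
      using B that assms by (intro mult_left_mono) auto
    then have "t * u0 \<eta> + \<eta> - x \<ge> 0"
      using that by (simp add: algebra_simps)
    then show ?thesis
      using that rho0_pos[of \<eta>] by (simp add: g_def)
  qed
  have "locally_bounded_measurable g"
    unfolding g_def by (intro locally_bounded_measurable_intros)
  then obtain y0 where "y0 \<ge> 0" "\<And>y. y \<ge> 0 \<Longrightarrow> integral {0..y0} g \<le> integral {0..y} g"
    using indefinite_integral_attains_min[of g "max 0 (x + t * B)"] nonneg by auto
  then show thesis
    using that by (simp add: Fy_integral g_def)
qed

lemma Gt_has_min:
  assumes "t \<ge> 0" "x \<ge> 0"
  obtains \<tau>0 where "\<tau>0 \<ge> 0" "\<And>\<tau>. \<tau> \<ge> 0 \<Longrightarrow> Gt ub rhob \<tau>0 x t \<le> Gt ub rhob \<tau> x t"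
proof -
  define g where "g = (\<lambda>\<eta>. (x - ub \<eta> * (t - \<eta>)) * rhob \<eta> * ub \<eta>)"
  have nonneg: "g \<eta> \<ge> 0" if "\<eta> \<ge> t" for \<eta>
  proof -
    have "ub \<eta> * (\<eta> - t) \<ge> 0"
      using ub_pos[of \<eta>] that assms by simp
    then have "x - ub \<eta> * (t - \<eta>) \<ge> 0"
      using assms by (simp add: algebra_simps)
    then show ?thesis
      using assms that rhob_pos[of \<eta>] ub_pos[of \<eta>] by (simp add: g_def)
  qed
  have "locally_bounded_measurable g"
    unfolding g_def by (intro locally_bounded_measurable_intros)
  then obtain \<tau>0 where "\<tau>0 \<ge> 0" "\<And>\<tau>. \<tau> \<ge> 0 \<Longrightarrow> integral {0..\<tau>0} g \<le> integral {0..\<tau>} g"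
    using indefinite_integral_attains_min[of g t] nonneg assms by auto
  then show thesis
    using that by (simp add: Gt_integral g_def)
qed

lemma Fmin_attained:
  assumes "t \<ge> 0"
  obtains y0 where "y0 \<ge> 0" "Fy u0 rho0 y0 x t = Fmin u0 rho0 x t"
proof -
  obtain y0 where "y0 \<ge> 0" "\<And>y. y \<ge> 0 \<Longrightarrow> Fy u0 rho0 y0 x t \<le> Fy u0 rho0 y x t"
    using Fy_has_min[OF assms] by blast
  moreover from this have "Fmin u0 rho0 x t = Fy u0 rho0 y0 x t"
    unfolding Fmin_def by (intro cInf_eq_minimum) auto
  ultimately show thesis
    using that by simp
qed

lemma Gmin_attained:
  assumes "t \<ge> 0" "x \<ge> 0"
  obtains \<tau>0 where "\<tau>0 \<ge> 0" "Gt ub rhob \<tau>0 x t = Gmin ub rhob x t"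
proof -
  obtain \<tau>0 where "\<tau>0 \<ge> 0" "\<And>\<tau>. \<tau> \<ge> 0 \<Longrightarrow> Gt ub rhob \<tau>0 x t \<le> Gt ub rhob \<tau> x t"
    using Gt_has_min[OF assms] by blast
  moreover from this have "Gmin ub rhob x t = Gt ub rhob \<tau>0 x t"
    unfolding Gmin_def by (intro cInf_eq_minimum) auto
  ultimately show thesis
    using that by simp
qed

lemma Fmin_le_Fy:
  assumes "t \<ge> 0" "y \<ge> 0"
  shows "Fmin u0 rho0 x t \<le> Fy u0 rho0 y x t"
proof -
  obtain y0 where "\<And>y. y \<ge> 0 \<Longrightarrow> Fy u0 rho0 y0 x t \<le> Fy u0 rho0 y x t"
    using Fy_has_min[OF assms(1)] by blast
  then have "bdd_below ((\<lambda>y. Fy u0 rho0 y x t) ` {0..})"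
    by (intro bdd_belowI2) simp
  then show ?thesis
    unfolding Fmin_def using assms(2) by (intro cInf_lower) auto
qed

lemma Gmin_le_Gt:
  assumes "t \<ge> 0" "x \<ge> 0" "\<tau> \<ge> 0"
  shows "Gmin ub rhob x t \<le> Gt ub rhob \<tau> x t"
proof -
  obtain \<tau>0 where "\<And>\<tau>. \<tau> \<ge> 0 \<Longrightarrow> Gt ub rhob \<tau>0 x t \<le> Gt ub rhob \<tau> x t"
    using Gt_has_min[OF assms(1,2)] by blast
  then have "bdd_below ((\<lambda>\<tau>. Gt ub rhob \<tau> x t) ` {0..})"
    by (intro bdd_belowI2) simp
  then show ?thesis
    unfolding Gmin_def using assms(3) by (intro cInf_lower) auto
qed

lemma Fmin_nonpos: "t \<ge> 0 \<Longrightarrow> Fmin u0 rho0 x t \<le> 0"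
  using Fmin_le_Fy[of t 0] by simp

lemma Gmin_nonpos: "t \<ge> 0 \<Longrightarrow> x \<ge> 0 \<Longrightarrow> Gmin ub rhob x t \<le> 0"
  using Gmin_le_Gt[of t x 0] by simp

lemma Fmin_antimono:
  assumes "t \<ge> 0" "x \<le> x'"
  shows "Fmin u0 rho0 x' t \<le> Fmin u0 rho0 x t"
proof -
  obtain y0 where y0: "y0 \<ge> 0" "Fy u0 rho0 y0 x t = Fmin u0 rho0 x t"
    using Fmin_attained[OF assms(1)] by blast
  have "Fmin u0 rho0 x' t \<le> Fy u0 rho0 y0 x' t"
    using Fmin_le_Fy[OF assms(1) y0(1)] .
  also have "\<dots> \<le> Fy u0 rho0 y0 x t"
    using Fy_antimono[OF y0(1) assms(2)] .
  finally show ?thesis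
    using y0(2) by simp
qed

lemma Gmin_mono:
  assumes "t \<ge> 0" "0 \<le> x" "x \<le> x'"
  shows "Gmin ub rhob x t \<le> Gmin ub rhob x' t"
proof -
  have "x' \<ge> 0"
    using assms(2,3) by linarith
  then obtain \<tau>0 where \<tau>0: "\<tau>0 \<ge> 0" "Gt ub rhob \<tau>0 x' t = Gmin ub rhob x' t"
    using Gmin_attained[OF assms(1)] by blast
  have "Gmin ub rhob x t \<le> Gt ub rhob \<tau>0 x t"
    using Gmin_le_Gt[OF assms(1,2) \<tau>0(1)] .
  also have "\<dots> \<le> Gt ub rhob \<tau>0 x' t"
    using Gt_mono[OF \<tau>0(1) assms(3)] .
  finally show ?thesis
    using \<tau>0(2) by simp
qed

lemma Fmin_eq_0_iff:
  assumes "t \<ge> 0"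
  shows "Fmin u0 rho0 x t = 0 \<longleftrightarrow> (\<forall>y\<ge>0. Fy u0 rho0 y x t \<ge> 0)"
proof
  show "\<forall>y\<ge>0. Fy u0 rho0 y x t \<ge> 0" if "Fmin u0 rho0 x t = 0"
    using Fmin_le_Fy[OF assms, of _ x] that by simp
next
  assume nonneg: "\<forall>y\<ge>0. Fy u0 rho0 y x t \<ge> 0"
  obtain y0 where y0: "y0 \<ge> 0" "Fy u0 rho0 y0 x t = Fmin u0 rho0 x t"
    using Fmin_attained[OF assms] by blast
  then have "Fy u0 rho0 y0 x t \<ge> 0"
    using nonneg by blast
  with y0(2) Fmin_nonpos[OF assms, of x] show "Fmin u0 rho0 x t = 0"
    by linarith
qed

lemma Gmin_eq_0_iff:
  assumes "t \<ge> 0" "x \<ge> 0"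
  shows "Gmin ub rhob x t = 0 \<longleftrightarrow> (\<forall>\<tau>\<ge>0. Gt ub rhob \<tau> x t \<ge> 0)"
proof
  show "\<forall>\<tau>\<ge>0. Gt ub rhob \<tau> x t \<ge> 0" if "Gmin ub rhob x t = 0"
    using Gmin_le_Gt[OF assms] that by simp
next
  assume nonneg: "\<forall>\<tau>\<ge>0. Gt ub rhob \<tau> x t \<ge> 0"
  obtain \<tau>0 where \<tau>0: "\<tau>0 \<ge> 0" "Gt ub rhob \<tau>0 x t = Gmin ub rhob x t"
    using Gmin_attained[OF assms] by blast
  then have "Gt ub rhob \<tau>0 x t \<ge> 0"
    using nonneg by blast
  with \<tau>0(2) Gmin_nonpos[OF assms] show "Gmin ub rhob x t = 0"
    by linarith
qed

lemma Fy_minimizers_eq_0: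
  assumes "t \<ge> 0" "x < r" "Fmin u0 rho0 x t = Fmin u0 rho0 r t"
  shows "{y. 0 \<le> y \<and> Fy u0 rho0 y x t = Fmin u0 rho0 x t} = {0}"
proof -
  have no_pos_min: "\<not> (y > 0 \<and> Fy u0 rho0 y x t = Fmin u0 rho0 x t)" for y
  proof
    assume y: "y > 0 \<and> Fy u0 rho0 y x t = Fmin u0 rho0 x t"
    then have "Fy u0 rho0 y r t < Fmin u0 rho0 r t"
      using Fy_strict_antimono[of y x r t] assms(2,3) by simp
    moreover have "Fmin u0 rho0 r t \<le> Fy u0 rho0 y r t"
      using Fmin_le_Fy[OF assms(1)] y by simp
    ultimately show False
      by simp
  qed
  obtain y0 where y0: "y0 \<ge> 0" "Fy u0 rho0 y0 x t = Fmin u0 rho0 x t"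
    using Fmin_attained[OF assms(1)] by blast
  with no_pos_min[of y0] have "y0 = 0"
    by auto
  with y0 no_pos_min show ?thesis
    by (fastforce simp del: Fy_at_0 simp: le_less)
qed

lemma Gt_minimizers_eq_0:
  assumes "t \<ge> 0" "0 \<le> l" "l < x" "Gmin ub rhob l t = Gmin ub rhob x t"
  shows "{\<tau>. 0 \<le> \<tau> \<and> Gt ub rhob \<tau> x t = Gmin ub rhob x t} = {0}"
proof -
  have no_pos_min: "\<not> (\<tau> > 0 \<and> Gt ub rhob \<tau> x t = Gmin ub rhob x t)" for \<tau>
  proof
    assume \<tau>: "\<tau> > 0 \<and> Gt ub rhob \<tau> x t = Gmin ub rhob x t"
    then have "Gt ub rhob \<tau> l t < Gmin ub rhob l t"
      using Gt_strict_mono[of \<tau> l x t] assms(3,4) by simp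
    moreover have "Gmin ub rhob l t \<le> Gt ub rhob \<tau> l t"
      using Gmin_le_Gt[OF assms(1,2)] \<tau> by simp
    ultimately show False
      by simp
  qed
  have "x \<ge> 0"
    using assms(2,3) by linarith
  then obtain \<tau>0 where \<tau>0: "\<tau>0 \<ge> 0" "Gt ub rhob \<tau>0 x t = Gmin ub rhob x t"
    using Gmin_attained[OF assms(1)] by blast
  with no_pos_min[of \<tau>0] have "\<tau>0 = 0"
    by auto
  with \<tau>0 no_pos_min show ?thesis
    by (fastforce simp del: Gt_at_0 simp: le_less)
qed

lemma ylow_eq_0: "Fmin u0 rho0 x t = 0 \<Longrightarrow> ylow u0 rho0 x t = 0"
  unfolding ylow_def by (rule cInf_eq_minimum) auto

lemma taulow_eq_0: "Gmin ub rhob x t = 0 \<Longrightarrow> taulow ub rhob x t = 0"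
  unfolding taulow_def by (rule cInf_eq_minimum) auto

section \<open>The zero set\<close>

definition zero_set :: "(real \<times> real) set" where
  "zero_set = {(x, t). 0 \<le> x \<and> 0 \<le> t \<and> Fmin u0 rho0 x t = 0 \<and> Gmin ub rhob x t = 0}"

lemma zero_set_imp_Iset: "(x, t) \<in> zero_set \<Longrightarrow> x \<in> Iset u0 rho0 ub rhob t"
  by (simp add: zero_set_def Iset_def)

lemma zero_set_scaleR:
  assumes "p \<in> zero_set" "0 \<le> s" "s \<le> 1"
  shows "s *\<^sub>R p \<in> zero_set"
proof -
  obtain x t where p: "p = (x, t)" "0 \<le> x" "0 \<le> t"
    and F0: "Fmin u0 rho0 x t = 0" and G0: "Gmin ub rhob x t = 0"
    using assms(1) by (auto simp: zero_set_def)
  have st: "0 \<le> s * x" "0 \<le> s * t"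
    using p assms(2) by auto
  have "Fy u0 rho0 y (s * x) (s * t) \<ge> 0" if "y \<ge> 0" for y
  proof -
    have "Fy u0 rho0 y (s * x) (s * t) = s * Fy u0 rho0 y x t + (1 - s) * E y"
      by (simp add: Fy_affine algebra_simps)
    then show ?thesis
      using F0 Fmin_eq_0_iff[OF p(3)] that E_nonneg[of y] assms(2,3) by simp
  qed
  moreover have "Gt ub rhob \<tau> (s * x) (s * t) \<ge> 0" if "\<tau> \<ge> 0" for \<tau>
  proof -
    have "Gt ub rhob \<tau> (s * x) (s * t) = s * Gt ub rhob \<tau> x t + (1 - s) * W \<tau>"
      by (simp add: Gt_affine algebra_simps)
    then show ?thesis
      using G0 Gmin_eq_0_iff[OF p(3,2)] that W_nonneg[of \<tau>] assms(2,3) by simp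
  qed
  ultimately show ?thesis
    using p st Fmin_eq_0_iff[OF st(2)] Gmin_eq_0_iff[OF st(2,1)] by (simp add: zero_set_def)
qed

lemma closed_segment_0_subset_zero_set: "p \<in> zero_set \<Longrightarrow> closed_segment 0 p \<subseteq> zero_set"
  by (auto simp: closed_segment_def intro: zero_set_scaleR)

lemma Iset_in_zero_set:
  assumes "(a, t) \<in> zero_set" "(b, t) \<in> zero_set" "b \<le> a" "x \<in> Iset u0 rho0 ub rhob t"
  shows "(x, t) \<in> zero_set"
proof -
  have t: "t \<ge> 0" and b: "b \<ge> 0"
    and Fa: "Fmin u0 rho0 a t = 0" and Gb: "Gmin ub rhob b t = 0"
    using assms(1,2) by (auto simp: zero_set_def)
  have x: "x \<ge> 0" and FG: "Fmin u0 rho0 x t = Gmin ub rhob x t"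
    using assms(4) by (auto simp: Iset_def)
  have "Fmin u0 rho0 x t = 0"
  proof (cases "x \<le> a")
    case True
    then show ?thesis
      using Fmin_antimono[OF t True] Fmin_nonpos[OF t, of x] Fa by linarith
  next
    case False
    then have "Gmin ub rhob b t \<le> Gmin ub rhob x t"
      using Gmin_mono[OF t b] assms(3) by simp
    then show ?thesis
      using Gmin_nonpos[OF t x] Gb FG by linarith
  qed
  with FG t x show ?thesis
    by (simp add: zero_set_def)
qed

lemma Iset_interval_in_zero_set:
  assumes t: "t \<ge> 0" and I: "Iset u0 rho0 ub rhob t = {l..r}" and "l < r"
    and x: "x \<in> {l..r}"
  shows "(x, t) \<in> zero_set"
proof -
  have "l \<in> Iset u0 rho0 ub rhob t" "r \<in> Iset u0 rho0 ub rhob t"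
    using I \<open>l < r\<close> by auto
  then have l: "l \<ge> 0" and FGl: "Fmin u0 rho0 l t = Gmin ub rhob l t"
    and FGr: "Fmin u0 rho0 r t = Gmin ub rhob r t"
    by (auto simp: Iset_def)
  have Glr: "Gmin ub rhob l t = Gmin ub rhob r t"
    using Fmin_antimono[OF t, of l r] Gmin_mono[OF t l, of r] \<open>l < r\<close> FGl FGr by simp
  have "0 \<in> {\<tau>. 0 \<le> \<tau> \<and> Gt ub rhob \<tau> r t = Gmin ub rhob r t}"
    using Gt_minimizers_eq_0[OF t l \<open>l < r\<close> Glr] by simp
  then have "Gmin ub rhob r t = 0"
    by simp
  then have "(l, t) \<in> zero_set" "(r, t) \<in> zero_set"
    using l \<open>l < r\<close> t FGl FGr Glr by (simp_all add: zero_set_def)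
  then show ?thesis
    using Iset_in_zero_set[of r t l x] I x \<open>l < r\<close> by simp
qed

lemma Iset_below_in_zero_set:
  assumes zero: "\<And>x. x \<in> {l..r} \<Longrightarrow> (x, t) \<in> zero_set" and "l \<le> r" "t > 0"
    and "0 \<le> t'" "t' \<le> t" "x \<in> Iset u0 rho0 ub rhob t'"
  shows "(x, t') \<in> zero_set"
proof -
  define s where "s = t' / t"
  have s: "0 \<le> s" "s \<le> 1" "s * t = t'"
    using assms(3-5) by (auto simp: s_def)
  have "(s * r, t') \<in> zero_set" "(s * l, t') \<in> zero_set"
    using zero_set_scaleR[OF zero s(1,2), of r] zero_set_scaleR[OF zero s(1,2), of l] \<open>l \<le> r\<close> s(3)
    by simp_all
  moreover have "s * l \<le> s * r"
    using \<open>l \<le> r\<close> s(1) by (rule mult_left_mono)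
  ultimately show ?thesis
    using Iset_in_zero_set assms(6) by blast
qed

lemma interior_Iset_nonempty:
  assumes zero: "\<And>x. x \<in> {l..r} \<Longrightarrow> (x, t) \<in> zero_set" and "l < r" "0 < t'" "t' \<le> t"
  shows "interior (Iset u0 rho0 ub rhob t') \<noteq> {}"
proof -
  define s where "s = t' / t"
  have s: "0 < s" "s \<le> 1" "s * t = t'"
    using assms(3,4) by (auto simp: s_def)
  have "z \<in> Iset u0 rho0 ub rhob t'" if "z \<in> {s * l<..<s * r}" for z
  proof -
    have "z / s \<in> {l..r}"
      using that s(1) by (auto simp: field_simps)
    then have "s *\<^sub>R (z / s, t) \<in> zero_set"
      using s by (intro zero_set_scaleR[OF zero]) auto
    moreover have "s *\<^sub>R (z / s, t) = (z, t')"
      using s by simp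
    ultimately show ?thesis
      by (simp add: zero_set_imp_Iset)
  qed
  then have "{s * l<..<s * r} \<subseteq> interior (Iset u0 rho0 ub rhob t')"
    by (intro interior_maximal) auto
  moreover have "{s * l<..<s * r} \<noteq> {}"
    using s(1) \<open>l < r\<close> by simp
  ultimately show ?thesis
    by blast
qed

lemma closed_segment_0_subset_Iset_graph:
  assumes zero: "\<And>x. x \<in> {l..r} \<Longrightarrow> (x, t) \<in> zero_set" and "l \<le> r" "t > 0"
    and p: "p \<in> {(x, t'). 0 \<le> t' \<and> t' \<le> t \<and> x \<in> Iset u0 rho0 ub rhob t'}"
  shows "closed_segment 0 p \<subseteq> {(x, t'). 0 \<le> t' \<and> t' \<le> t \<and> x \<in> Iset u0 rho0 ub rhob t'}"
proof
  fix q assume q: "q \<in> closed_segment 0 p"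
  obtain x t' where "p = (x, t')" "0 \<le> t'" "t' \<le> t" "x \<in> Iset u0 rho0 ub rhob t'"
    using p by auto
  then have "p \<in> zero_set"
    using Iset_below_in_zero_set[OF zero \<open>l \<le> r\<close> \<open>t > 0\<close>] by simp
  then have "q \<in> zero_set"
    using closed_segment_0_subset_zero_set q by blast
  moreover obtain u where "0 \<le> u" "u \<le> 1" "q = (u * x, u * t')"
    using q \<open>p = (x, t')\<close> by (auto simp: closed_segment_def)
  moreover have "u * t' \<le> t"
    using calculation \<open>0 \<le> t'\<close> \<open>t' \<le> t\<close> by (meson mult_left_le_one_le order_trans)
  ultimately show "q \<in> {(x, t'). 0 \<le> t' \<and> t' \<le> t \<and> x \<in> Iset u0 rho0 ub rhob t'}"
    by (auto simp: zero_set_def Iset_def)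
qed

end

theorem lemma2p7:
  fixes u0 ub rho0 rhob :: "real \<Rightarrow> real" and t l r :: real
  assumes u0_meas: "set_borel_measurable borel {0..} u0"
    and u0_bdd: "\<exists>B. \<forall>\<eta>\<ge>0. \<bar>u0 \<eta>\<bar> \<le> B"
    and ub_meas: "set_borel_measurable borel {0..} ub"
    and ub_bdd: "\<exists>B. \<forall>\<eta>\<ge>0. \<bar>ub \<eta>\<bar> \<le> B"
    and ub_pos: "\<forall>\<eta>\<ge>0. ub \<eta> > 0"
    and rho0_meas: "set_borel_measurable borel {0..} rho0"
    and rho0_pos: "\<forall>\<eta>\<ge>0. rho0 \<eta> > 0"
    and rho0_locbdd: "\<forall>M\<ge>0. \<exists>C. \<forall>\<eta>\<in>{0..M}. rho0 \<eta> \<le> C"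
    and rhob_meas: "set_borel_measurable borel {0..} rhob"
    and rhob_pos: "\<forall>\<eta>\<ge>0. rhob \<eta> > 0"
    and rhob_locbdd: "\<forall>M\<ge>0. \<exists>C. \<forall>\<eta>\<in>{0..M}. rhob \<eta> \<le> C"
    and t_pos: "t > 0"
    and I_eq: "Iset u0 rho0 ub rhob t = {l..r}"
    and lr: "l < r"
  shows "(\<forall>x\<in>{l..r}. Fmin u0 rho0 x t = 0 \<and> Gmin ub rhob x t = 0)
    \<and> (\<forall>x\<in>{l<..r}. taulow ub rhob x t = 0 \<and> tauupp ub rhob x t = 0)
    \<and> taulow ub rhob l t = 0
    \<and> (\<forall>x\<in>{l..<r}. ylow u0 rho0 x t = 0 \<and> yupp u0 rho0 x t = 0)
    \<and> ylow u0 rho0 r t = 0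
    \<and> (\<forall>t'. 0 < t' \<and> t' < t \<longrightarrow> interior (Iset u0 rho0 ub rhob t') \<noteq> {})
    \<and> (\<forall>p\<in>{(x, t'). 0 \<le> t' \<and> t' \<le> t \<and> x \<in> Iset u0 rho0 ub rhob t'}.
         closed_segment (0::real \<times> real) p
           \<subseteq> {(x, t'). 0 \<le> t' \<and> t' \<le> t \<and> x \<in> Iset u0 rho0 ub rhob t'})"
proof -
  interpret initial_boundary_data u0 ub rho0 rhob
    using assms by unfold_locales
      (auto intro: locally_bounded_measurableI_bounded locally_bounded_measurableI_pos)
  have t: "t \<ge> 0"
    using t_pos by simp
  note zero = Iset_interval_in_zero_set[OF t I_eq lr]
  have FG0: "Fmin u0 rho0 x t = 0 \<and> Gmin ub rhob x t = 0" if "x \<in> {l..r}" for x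
    using zero[OF that] by (simp add: zero_set_def)
  have "l \<ge> 0"
    using zero[of l] lr by (simp add: zero_set_def)
  have "taulow ub rhob x t = 0 \<and> tauupp ub rhob x t = 0" if "x \<in> {l<..r}" for x
    using Gt_minimizers_eq_0[OF t \<open>l \<ge> 0\<close>, of x] FG0 that lr
    by (simp add: taulow_def tauupp_def)
  moreover have "ylow u0 rho0 x t = 0 \<and> yupp u0 rho0 x t = 0" if "x \<in> {l..<r}" for x
    using Fy_minimizers_eq_0[OF t, of x r] FG0 that lr
    by (simp add: ylow_def yupp_def)
  ultimately show ?thesis
    using FG0 taulow_eq_0 ylow_eq_0 lr interior_Iset_nonempty[OF zero lr]
      closed_segment_0_subset_Iset_graph[OF zero _ t_pos]
    by auto
qed

end
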